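(* Let $\mathcal F=(f_t)$ be a continuous flow on a compact metric space $(X,d)$ and $\varepsilon>0$. Then $\mathrm{NE}^\times(\varepsilon)=(X\times\mathrm{NE}(\varepsilon))\cup(\mathrm{NE}(\varepsilon)\times X)$.
   Context: $\Gamma_\varepsilon(x)=\{y: d(f_tx,f_ty)<\varepsilon\ \forall t\in\mathbb{R}\}$ and $\mathrm{NE}(\varepsilon)=\{x:\Gamma_\varepsilon(x)\not\subset f_{[-s,s]}(x)\text{ for every } s>0\}$, where $f_{[-s,s]}(x)=\{f_rx:r\in[-s,s]\}$. On $X\times X$ with metric $\tilde d((x,y),(w,z))=\max\{d(x,w),d(y,z)\}$ and product flow $(f_t\times f_t)$: $\Gamma_\varepsilon(x,y)=\{(x',y'):\tilde d((f_tx,f_ty),(f_tx',f_ty'))<\varepsilon\ \forall t\in\mathbb{R}\}$ and $\mathrm{NE}^\times(\varepsilon)=\{(x,y):\Gamma_\varepsilon(x,y)\not\subset f_{[-s,s]}(x)\times f_{[-s,s]}(y)\text{ for any }s>0\}$. *)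

theory Defs
  imports "HOL-Analysis.Analysis"
begin

definition continuous_flow :: "'a::metric_space set \<Rightarrow> (real \<Rightarrow> 'a \<Rightarrow> 'a) \<Rightarrow> bool" where
  "continuous_flow X f \<longleftrightarrow>
     (\<forall>t. f t ` X \<subseteq> X) \<and>
     (\<forall>x\<in>X. f 0 x = x) \<and>
     (\<forall>s t. \<forall>x\<in>X. f (s + t) x = f s (f t x)) \<and>
     continuous_on (UNIV \<times> X) (\<lambda>(t, x). f t x)"

definition orbit_seg :: "(real \<Rightarrow> 'a \<Rightarrow> 'a) \<Rightarrow> real \<Rightarrow> 'a \<Rightarrow> 'a set" where
  "orbit_seg f s x = {f r x | r. r \<in> {-s..s}}"

definition Gamma :: "'a::metric_space set \<Rightarrow> (real \<Rightarrow> 'a \<Rightarrow> 'a) \<Rightarrow> real \<Rightarrow> 'a \<Rightarrow> 'a set" where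
  "Gamma X f \<epsilon> x = {y \<in> X. \<forall>t. dist (f t x) (f t y) < \<epsilon>}"

definition NE :: "'a::metric_space set \<Rightarrow> (real \<Rightarrow> 'a \<Rightarrow> 'a) \<Rightarrow> real \<Rightarrow> 'a set" where
  "NE X f \<epsilon> = {x \<in> X. \<forall>s>0. \<not> Gamma X f \<epsilon> x \<subseteq> orbit_seg f s x}"

text \<open>Product flow on X \<times> X with the max metric.\<close>
definition Gamma_prod :: "'a::metric_space set \<Rightarrow> (real \<Rightarrow> 'a \<Rightarrow> 'a) \<Rightarrow> real \<Rightarrow> 'a \<Rightarrow> 'a \<Rightarrow> ('a \<times> 'a) set" where
  "Gamma_prod X f \<epsilon> x y = {(x', y') \<in> X \<times> X.
      \<forall>t. max (dist (f t x) (f t x')) (dist (f t y) (f t y')) < \<epsilon>}"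

definition NE_prod :: "'a::metric_space set \<Rightarrow> (real \<Rightarrow> 'a \<Rightarrow> 'a) \<Rightarrow> real \<Rightarrow> ('a \<times> 'a) set" where
  "NE_prod X f \<epsilon> = {(x, y) \<in> X \<times> X.
      \<forall>s>0. \<not> Gamma_prod X f \<epsilon> x y \<subseteq> orbit_seg f s x \<times> orbit_seg f s y}"

end

theory Submission
  imports Defs
begin

text \<open>Since \<open>\<Gamma>\<^sub>\<epsilon>(x, y) = \<Gamma>\<^sub>\<epsilon>(x) \<times> \<Gamma>\<^sub>\<epsilon>(y)\<close> with both factors nonempty, the pair \<open>(x, y)\<close>
  is expansive at scale \<open>s\<close> iff \<open>x\<close> or \<open>y\<close> is. Orbit segments grow with \<open>s\<close>, so if
  both \<open>x\<close> and \<open>y\<close> failed to be in \<open>NE(\<epsilon>)\<close>, witnessed by \<open>s\<^sub>1\<close> and \<open>s\<^sub>2\<close>, the pair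
  would fail at \<open>max s\<^sub>1 s\<^sub>2\<close>.\<close>

lemma orbit_seg_mono: "s \<le> s' \<Longrightarrow> orbit_seg f s x \<subseteq> orbit_seg f s' x"
  unfolding orbit_seg_def by fastforce

lemma Gamma_prod_eq_Times: "Gamma_prod X f \<epsilon> x y = Gamma X f \<epsilon> x \<times> Gamma X f \<epsilon> y"
  unfolding Gamma_prod_def Gamma_def by auto

lemma self_in_Gamma: "\<epsilon> > 0 \<Longrightarrow> x \<in> X \<Longrightarrow> x \<in> Gamma X f \<epsilon> x"
  unfolding Gamma_def by auto

lemma mem_NE_prod_iff:
  assumes "\<epsilon> > 0"
  shows "(x, y) \<in> NE_prod X f \<epsilon> \<longleftrightarrow> x \<in> X \<and> y \<in> X \<and>
    (\<forall>s>0. \<not> (Gamma X f \<epsilon> x \<subseteq> orbit_seg f s x \<and> Gamma X f \<epsilon> y \<subseteq> orbit_seg f s y))"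
  using self_in_Gamma[OF assms]
  unfolding NE_prod_def Gamma_prod_eq_Times times_subset_iff by blast

lemma never_both_iff_never_one:
  fixes P Q :: "real \<Rightarrow> bool"
  assumes "\<And>s s'. s \<le> s' \<Longrightarrow> P s \<Longrightarrow> P s'" and "\<And>s s'. s \<le> s' \<Longrightarrow> Q s \<Longrightarrow> Q s'"
  shows "(\<forall>s>0. \<not> (P s \<and> Q s)) \<longleftrightarrow> (\<forall>s>0. \<not> P s) \<or> (\<forall>s>0. \<not> Q s)"
proof
  assume never_both: "\<forall>s>0. \<not> (P s \<and> Q s)"
  show "(\<forall>s>0. \<not> P s) \<or> (\<forall>s>0. \<not> Q s)"
  proof (rule ccontr)
    assume "\<not> ?thesis"
    then obtain s\<^sub>1 s\<^sub>2 where "s\<^sub>1 > 0" "P s\<^sub>1" "s\<^sub>2 > 0" "Q s\<^sub>2" by auto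
    then have "max s\<^sub>1 s\<^sub>2 > 0" by simp
    moreover have "P (max s\<^sub>1 s\<^sub>2)"
      using assms(1)[OF max.cobounded1 \<open>P s\<^sub>1\<close>] .
    moreover have "Q (max s\<^sub>1 s\<^sub>2)"
      using assms(2)[OF max.cobounded2 \<open>Q s\<^sub>2\<close>] .
    ultimately show False using never_both by blast
  qed
qed auto

theorem lemma4p4:
  fixes X :: "'a::metric_space set" and f :: "real \<Rightarrow> 'a \<Rightarrow> 'a" and \<epsilon> :: real
  assumes "compact X" and "continuous_flow X f" and "\<epsilon> > 0"
  shows "NE_prod X f \<epsilon> = (X \<times> NE X f \<epsilon>) \<union> (NE X f \<epsilon> \<times> X)"
proof (rule set_eqI)
  fix p :: "'a \<times> 'a"
  obtain x y where p: "p = (x, y)" by (cases p)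
  have "(\<forall>s>0. \<not> (Gamma X f \<epsilon> x \<subseteq> orbit_seg f s x \<and> Gamma X f \<epsilon> y \<subseteq> orbit_seg f s y))
      \<longleftrightarrow> (\<forall>s>0. \<not> Gamma X f \<epsilon> x \<subseteq> orbit_seg f s x) \<or> (\<forall>s>0. \<not> Gamma X f \<epsilon> y \<subseteq> orbit_seg f s y)"
    by (rule never_both_iff_never_one) (meson orbit_seg_mono order_trans)+
  then show "p \<in> NE_prod X f \<epsilon> \<longleftrightarrow> p \<in> (X \<times> NE X f \<epsilon>) \<union> (NE X f \<epsilon> \<times> X)"
    unfolding p mem_NE_prod_iff[OF \<open>\<epsilon> > 0\<close>] NE_def by blast
qed

end
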